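(* Let $\mathcal{O}_d$ be the space of entire functions $f$ such that $|f(x)e^{mx}|\to0$ as $x\to-\infty$ for some $m<1$, and for such $f$ define \[ (\mathfrak{N}f)(x)=\frac{e^{-i\pi x}}{2i\sin(\pi x)\,\Gamma(-x)}\int_{-\infty}^{(0+)}f(s)\,e^{s}(-s)^{-x-1}\,ds . \] Then $\mathfrak{N}$ is $\mathbb{C}$-linear and, for every $f\in\mathcal{O}_d$, \[ \mathfrak{N}(f')(x)=(\mathfrak{N}f)(x+1)-(\mathfrak{N}f)(x),\qquad \mathfrak{N}(sf)(x)=x\,(\mathfrak{N}f)(x-1), \] i.e. $\mathfrak{N}$ is left linear over the Weyl algebra $\mathbb{C}\langle X,\partial\rangle$ when the source carries the action $\partial f=f'$, $Xf(x)=xf(x)$ and the target carries the action $\partial g(x)=g(x+1)-g(x)$, $Xg(x)=xg(x-1)$.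
   Context: The integral $\int_{-\infty}^{(0+)}$ is over a Hankel contour starting at $-\infty$ below the negative real axis, circling the origin counterclockwise, and returning to $-\infty$ above the negative real axis, with the branch of $(-s)^{-x-1}$ determined by $|\arg(-s)|<\pi$ (principal branch) on the contour. *)

theory Defs
  imports "HOL-Complex_Analysis.Complex_Analysis"
begin

definition O_d :: "(complex \<Rightarrow> complex) set" where
  "O_d = {f. f holomorphic_on UNIV \<and>
         (\<exists>m::real. m < 1 \<and>
            ((\<lambda>x::real. norm (f (of_real x) * exp (of_real (m * x)))) \<longlongrightarrow> 0) at_bot)}"

text \<open>Hankel contour integral of g(s) (-s)^a over the contour: from -infinity to -1
  below the negative real axis, the unit circle counterclockwise from arg s = -pi to
  arg s = pi, and back from -1 to -infinity above the negative real axis.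
  The branch of (-s)^a is the principal one at the start of the contour (arg(-s) = 0 on
  the lower ray) continued continuously along the contour: on the circle
  (-s)^a = exp(i pi a) s^a (principal s^a), on the upper ray (-s)^a = exp(2 pi i a) |s|^a.\<close>
definition hankel_integral :: "(complex \<Rightarrow> complex) \<Rightarrow> complex \<Rightarrow> complex" where
  "hankel_integral g a =
     Lim at_top (\<lambda>R::real. contour_integral (linepath (- of_real R) (-1))
                               (\<lambda>s. g s * (-s) powr a))
   + contour_integral (part_circlepath 0 1 (-pi) pi)
                               (\<lambda>s. g s * (exp (\<i> * of_real pi * a) * s powr a))
   + Lim at_top (\<lambda>R::real. contour_integral (linepath (-1) (- of_real R))
                               (\<lambda>s. g s * (exp (2 * \<i> * of_real pi * a) * (-s) powr a)))"

definition frakN :: "(complex \<Rightarrow> complex) \<Rightarrow> complex \<Rightarrow> complex" where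
  "frakN f x = exp (- \<i> * of_real pi * x) / (2 * \<i> * sin (of_real pi * x) * Gamma (- x))
               * hankel_integral (\<lambda>s. f s * exp s) (- x - 1)"

end

theory Submission
  imports Defs "HOL-Real_Asymp.Real_Asymp"
begin

(* Cutting the Hankel contour at s = -1 into two rays and the unit circle, and
   parametrising the circle by s = exp (i t) with the continuous branch
   (-s)^a = exp (i a (t + pi)), the Hankel integral of G with exponent a becomes
   (1 - exp (2 pi i a)) times the improper integral of G(-y) y^a over [1, oo) plus a
   circle integral.  Linearity is then that of integrals; multiplying by s raises the
   exponent by one (the factor exp (2 pi i a) being 1-periodic); and integration by parts
   on rays and circle gives H(G', a + 1) = (a + 1) H(G, a), the boundary terms cancelling
   at s = -1 and vanishing at infinity thanks to the exponential decay of f(s) e^s.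
   With G = f e^s and a = -x - 1, the relations for frakN follow from
   Gamma (z + 1) = z Gamma z and the antiperiodicity of sin (pi x) and exp (-i pi x). *)

section \<open>Improper integrals of exponentially decaying functions\<close>

lemma bounded_on_atLeast_if_tendsto_zero:
  fixes g :: "real \<Rightarrow> real"
  assumes cont: "continuous_on {a..} g" and lim: "(g \<longlongrightarrow> 0) at_top"
  obtains K where "\<And>y. y \<ge> a \<Longrightarrow> \<bar>g y\<bar> \<le> K"
proof -
  have "eventually (\<lambda>y. \<bar>g y\<bar> < 1) at_top"
    using lim by (auto simp: tendsto_iff dist_real_def)
  then obtain Y where Y: "\<And>y. y \<ge> Y \<Longrightarrow> \<bar>g y\<bar> < 1"
    by (auto simp: eventually_at_top_linorder)
  have "compact (g ` {a..max a Y})"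
    by (intro compact_continuous_image continuous_on_subset[OF cont]) auto
  then obtain B where B: "\<forall>y\<in>{a..max a Y}. \<bar>g y\<bar> \<le> B"
    by (auto dest!: compact_imp_bounded simp: bounded_iff)
  have "\<bar>g y\<bar> \<le> max 1 B" if "y \<ge> a" for y
  proof (cases "y \<le> max a Y")
    case True
    then have "\<bar>g y\<bar> \<le> B" using B that by simp
    then show ?thesis by linarith
  next
    case False
    then show ?thesis using Y[of y] by linarith
  qed
  then show ?thesis using that by blast
qed

lemma tendsto_zero_exp_decay_mult_powr:
  fixes g :: "real \<Rightarrow> complex"
  assumes decay: "((\<lambda>y. norm (g y) * exp (c * y)) \<longlongrightarrow> 0) at_top" and "c' < c"
  shows "((\<lambda>y. norm (g y * of_real y powr a) * exp (c' * y)) \<longlongrightarrow> 0) at_top"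
proof -
  define \<delta> where "\<delta> = c - c'"
  have "\<delta> > 0" using \<open>c' < c\<close> by (simp add: \<delta>_def)
  have "((\<lambda>y. (norm (g y) * exp (c * y)) * (y powr Re a * exp (- \<delta> * y))) \<longlongrightarrow> 0) at_top"
    by (rule tendsto_mult_zero[OF decay]) (use \<open>\<delta> > 0\<close> in real_asymp)
  moreover have "\<forall>\<^sub>F y in at_top. (norm (g y) * exp (c * y)) * (y powr Re a * exp (- \<delta> * y))
      = norm (g y * of_real y powr a) * exp (c' * y)"
    using eventually_gt_at_top[of 0]
  proof eventually_elim
    case (elim y)
    have "exp (c * y) * exp (- \<delta> * y) = exp (c' * y)"
      by (simp add: \<delta>_def algebra_simps flip: exp_add)
    then show ?case
      using elim by (simp add: norm_mult norm_powr_real_powr mult_ac)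
  qed
  ultimately show ?thesis
    by (rule Lim_transform_eventually)
qed

lemma integral_tendsto_if_exp_decay:
  fixes h :: "real \<Rightarrow> complex"
  assumes cont: "continuous_on {a..} h" and "c > 0"
    and decay: "((\<lambda>y. norm (h y) * exp (c * y)) \<longlongrightarrow> 0) at_top"
  shows "\<exists>l. ((\<lambda>R. integral {a..R} h) \<longlongrightarrow> l) at_top"
proof -
  have "continuous_on {a..} (\<lambda>y. norm (h y) * exp (c * y))"
    by (intro continuous_intros cont)
  then obtain K where K: "\<And>y. y \<ge> a \<Longrightarrow> \<bar>norm (h y) * exp (c * y)\<bar> \<le> K"
    using bounded_on_atLeast_if_tendsto_zero decay by blast
  have bound: "norm (h y) \<le> K * exp (- c * y)" if "y \<ge> a" for y
  proof -
    have "norm (h y) = (norm (h y) * exp (c * y)) * exp (- c * y)"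
      by (simp add: mult.assoc flip: exp_add)
    also have "\<dots> \<le> K * exp (- c * y)"
      using K[OF that] by (intro mult_right_mono) auto
    finally show ?thesis .
  qed
  have int: "h absolutely_integrable_on {a..}"
  proof (rule measurable_bounded_by_integrable_imp_absolutely_integrable)
    show "h \<in> borel_measurable (lebesgue_on {a..})"
      by (rule continuous_imp_measurable_on_sets_lebesgue[OF cont]) auto
    show "(\<lambda>y. K * exp (- c * y)) integrable_on {a..}"
      by (intro integrable_on_mult_right integrable_on_exp_minus_to_infinity \<open>c > 0\<close>)
  qed (use bound in auto)
  have "((\<lambda>R. LINT y:{a..R}|lebesgue. h y) \<longlongrightarrow> (LINT y:{a..}|lebesgue. h y)) at_top"
    by (rule tendsto_set_lebesgue_integral_at_top[OF _ int]) auto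
  moreover have "(LINT y:{a..R}|lebesgue. h y) = integral {a..R} h" for R
    by (rule set_lebesgue_integral_eq_integral(2), rule set_integrable_subset[OF int]) auto
  ultimately show ?thesis by auto
qed

section \<open>The Hankel integral as rays plus circle\<close>

definition hankel_ray :: "(complex \<Rightarrow> complex) \<Rightarrow> complex \<Rightarrow> real \<Rightarrow> complex" where
  "hankel_ray G a R = integral {1..R} (\<lambda>y. G (- of_real y) * of_real y powr a)"

lemma continuous_on_hankel_ray_integrand:
  fixes G :: "complex \<Rightarrow> complex"
  assumes "continuous_on UNIV G"
  shows "continuous_on {1..} (\<lambda>y. G (- of_real y) * of_real y powr a)"
proof -
  have "continuous_on {1..} (\<lambda>y. G (- of_real y))"
    by (intro continuous_on_compose2[OF assms] continuous_intros) auto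
  then show ?thesis by (intro continuous_intros) auto
qed

lemma has_integral_hankel_ray:
  assumes "continuous_on UNIV G"
  shows "((\<lambda>y. G (- of_real y) * of_real y powr a) has_integral hankel_ray G a R) {1..R}"
  unfolding hankel_ray_def
  by (intro integrable_integral integrable_continuous_real
        continuous_on_subset[OF continuous_on_hankel_ray_integrand[OF assms]]) auto

lemma has_contour_integral_lower_ray:
  assumes "continuous_on UNIV G" and "R > 1"
  shows "((\<lambda>s. G s * (-s) powr a) has_contour_integral hankel_ray G a R) (linepath (- of_real R) (-1))"
proof -
  have "((\<lambda>x. G (of_real x) * (- of_real x) powr a) has_integral hankel_ray G a R) {-R..-1}"
    using has_integral_reflect_real[THEN iffD2, OF has_integral_hankel_ray[OF assms(1)]] by simp
  then show ?thesis
    using \<open>R > 1\<close> by (subst has_contour_integral_linepath_Reals_iff) auto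
qed

lemma has_contour_integral_upper_ray:
  assumes "continuous_on UNIV G" and "R > 1"
  shows "((\<lambda>s. G s * (E * (-s) powr a)) has_contour_integral - E * hankel_ray G a R)
           (linepath (-1) (- of_real R))"
proof -
  have "((\<lambda>s. E * (G s * (-s) powr a)) has_contour_integral - (E * hankel_ray G a R))
          (reversepath (linepath (- of_real R) (-1)))"
    by (intro has_contour_integral_reversepath has_contour_integral_lmul
          has_contour_integral_lower_ray assms) auto
  then show ?thesis by (simp add: mult_ac)
qed

lemma hankel_ray_linear:
  assumes "continuous_on UNIV G1" and "continuous_on UNIV G2"
  shows "hankel_ray (\<lambda>s. c * G1 s + d * G2 s) a R = c * hankel_ray G1 a R + d * hankel_ray G2 a R"
proof -
  have "hankel_ray (\<lambda>s. c * G1 s + d * G2 s) a R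
      = integral {1..R} (\<lambda>y. c * (G1 (- of_real y) * of_real y powr a)
                             + d * (G2 (- of_real y) * of_real y powr a))"
    unfolding hankel_ray_def by (simp add: algebra_simps)
  also have "\<dots> = c * hankel_ray G1 a R + d * hankel_ray G2 a R"
    by (intro integral_unique has_integral_add has_integral_mult_right has_integral_hankel_ray assms)
  finally show ?thesis .
qed

lemma hankel_ray_mult_id: "hankel_ray (\<lambda>s. s * G s) a R = - hankel_ray G (a + 1) R"
proof -
  have "hankel_ray (\<lambda>s. s * G s) a R = integral {1..R} (\<lambda>y. - (G (- of_real y) * of_real y powr (a + 1)))"
    unfolding hankel_ray_def
    by (rule integral_cong) (auto simp: powr_add)
  then show ?thesis by (simp add: hankel_ray_def integral_neg)
qed

lemma hankel_ray_deriv: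
  assumes G: "G holomorphic_on UNIV" and "R \<ge> 1"
  shows "hankel_ray (deriv G) (a + 1) R
           = G (-1) - G (- of_real R) * of_real R powr (a + 1) + (a + 1) * hankel_ray G a R"
proof -
  have G': "(G has_field_derivative deriv G z) (at z)" for z
    using G by (auto intro: holomorphic_derivI)
  define F where "F y = G (- of_real y) * of_real y powr (a + 1)" for y :: real
  define F' where "F' y = (a + 1) * (G (- of_real y) * of_real y powr a)
                            - deriv G (- of_real y) * of_real y powr (a + 1)" for y :: real
  have "(F has_vector_derivative F' y) (at y within {1..R})" if "y \<in> {1..R}" for y
  proof -
    have "of_real y \<notin> \<real>\<^sub>\<le>\<^sub>0" using that by (auto simp: complex_nonpos_Reals_iff)
    have "((\<lambda>z. G (- z)) has_field_derivative - deriv G (- of_real y)) (at (of_real y))"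
      using DERIV_chain2[OF G' DERIV_minus[OF DERIV_ident]] by simp
    from DERIV_mult[OF this has_field_derivative_powr[OF \<open>of_real y \<notin> \<real>\<^sub>\<le>\<^sub>0\<close>]]
    show ?thesis
      unfolding F_def[abs_def] F'_def
      by (rule has_vector_derivative_real_field[OF DERIV_cong]) (simp add: algebra_simps)
  qed
  then have "(F' has_integral F R - F 1) {1..R}"
    by (intro fundamental_theorem_of_calculus \<open>R \<ge> 1\<close> ballI)
  moreover have "(F' has_integral (a + 1) * hankel_ray G a R - hankel_ray (deriv G) (a + 1) R) {1..R}"
    unfolding F'_def[abs_def]
    using G by (intro has_integral_diff has_integral_mult_right has_integral_hankel_ray
                  holomorphic_on_imp_continuous_on holomorphic_deriv) auto
  ultimately have "(a + 1) * hankel_ray G a R - hankel_ray (deriv G) (a + 1) R = F R - F 1"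
    by (rule has_integral_unique[rotated])
  then show ?thesis
    by (simp add: F_def algebra_simps)
qed

(* Along the circle s = exp (i t), -pi \<le> t \<le> pi, the branch of (-s)^a continued from the
   lower ray is exp (i a (t + pi)); unlike s powr a it has no jump at t = -pi. *)
definition hankel_circle_integrand :: "(complex \<Rightarrow> complex) \<Rightarrow> complex \<Rightarrow> real \<Rightarrow> complex" where
  "hankel_circle_integrand G a t =
     G (exp (\<i> * of_real t)) * exp (\<i> * a * (of_real t + of_real pi)) * \<i> * exp (\<i> * of_real t)"

definition hankel_circle :: "(complex \<Rightarrow> complex) \<Rightarrow> complex \<Rightarrow> complex" where
  "hankel_circle G a = integral {-pi..pi} (hankel_circle_integrand G a)"

lemma has_integral_hankel_circle:
  assumes "continuous_on UNIV G"
  shows "(hankel_circle_integrand G a has_integral hankel_circle G a) {-pi..pi}"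
proof -
  have "continuous_on {-pi..pi} (\<lambda>t. G (exp (\<i> * of_real t)))"
    by (rule continuous_on_compose2[OF assms]) (auto intro!: continuous_intros)
  then show ?thesis
    unfolding hankel_circle_def hankel_circle_integrand_def[abs_def]
    by (intro integrable_integral integrable_continuous_real continuous_intros)
qed

lemma contour_integral_hankel_circle:
  "contour_integral (part_circlepath 0 1 (-pi) pi) (\<lambda>s. G s * (exp (\<i> * of_real pi * a) * s powr a))
     = hankel_circle G a"
proof -
  have "contour_integral (part_circlepath 0 1 (-pi) pi) (\<lambda>s. G s * (exp (\<i> * of_real pi * a) * s powr a))
     = integral {-pi..pi} (\<lambda>t. G (cis t) * (exp (\<i> * of_real pi * a) * cis t powr a) * \<i> * cis t)"
    by (simp add: contour_integral_part_circlepath_eq)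
  also have "\<dots> = hankel_circle G a"
    unfolding hankel_circle_def
  proof (rule integral_spike[of "{-pi}"])
    fix t assume "t \<in> {-pi..pi} - {-pi}"
    then have "Ln (exp (\<i> * of_real t)) = \<i> * of_real t"
      by (intro Ln_exp) auto
    then have "exp (\<i> * of_real pi * a) * cis t powr a = exp (\<i> * a * (of_real t + of_real pi))"
      by (simp add: powr_def cis_conv_exp algebra_simps flip: exp_add)
    then show "hankel_circle_integrand G a t
                 = G (cis t) * (exp (\<i> * of_real pi * a) * cis t powr a) * \<i> * cis t"
      by (simp add: hankel_circle_integrand_def cis_conv_exp)
  qed simp
  finally show ?thesis .
qed

lemma exp_hankel_phase_succ:
  "exp (\<i> * (a + 1) * (of_real t + of_real pi)) = - exp (\<i> * a * (of_real t + of_real pi)) * exp (\<i> * of_real t)"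
proof -
  have "\<i> * (a + 1) * (of_real t + of_real pi)
          = \<i> * a * (of_real t + of_real pi) + \<i> * of_real t + \<i> * of_real pi"
    by (simp add: algebra_simps)
  then show ?thesis by (simp add: exp_add)
qed

lemma hankel_circle_integrand_succ:
  "hankel_circle_integrand G (a + 1) t = - exp (\<i> * of_real t) * hankel_circle_integrand G a t"
  unfolding hankel_circle_integrand_def exp_hankel_phase_succ by (simp add: mult_ac)

lemma hankel_circle_linear:
  assumes "continuous_on UNIV G1" and "continuous_on UNIV G2"
  shows "hankel_circle (\<lambda>s. c * G1 s + d * G2 s) a = c * hankel_circle G1 a + d * hankel_circle G2 a"
proof -
  have "hankel_circle (\<lambda>s. c * G1 s + d * G2 s) a
      = integral {-pi..pi} (\<lambda>t. c * hankel_circle_integrand G1 a t + d * hankel_circle_integrand G2 a t)"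
    unfolding hankel_circle_def hankel_circle_integrand_def by (simp add: algebra_simps)
  also have "\<dots> = c * hankel_circle G1 a + d * hankel_circle G2 a"
    by (intro integral_unique has_integral_add has_integral_mult_right has_integral_hankel_circle assms)
  finally show ?thesis .
qed

lemma hankel_circle_mult_id: "hankel_circle (\<lambda>s. s * G s) a = - hankel_circle G (a + 1)"
proof -
  have "hankel_circle_integrand (\<lambda>s. s * G s) a = (\<lambda>t. - hankel_circle_integrand G (a + 1) t)"
    by (simp add: fun_eq_iff hankel_circle_integrand_succ) (simp add: hankel_circle_integrand_def mult_ac)
  then show ?thesis by (simp add: hankel_circle_def integral_neg)
qed

lemma hankel_circle_deriv:
  assumes G: "G holomorphic_on UNIV"
  shows "hankel_circle (deriv G) (a + 1)
           = G (-1) * (exp (2 * \<i> * of_real pi * (a + 1)) - 1) + (a + 1) * hankel_circle G a"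
proof -
  have G': "(G has_field_derivative deriv G z) (at z)" for z
    using G by (auto intro: holomorphic_derivI)
  define K where "K z = G (exp (\<i> * z)) * exp (\<i> * (a + 1) * (z + of_real pi))" for z
  have "((\<lambda>t. K (of_real t)) has_vector_derivative
          hankel_circle_integrand (deriv G) (a + 1) t - (a + 1) * hankel_circle_integrand G a t)
          (at t within {-pi..pi})" for t
  proof -
    let ?e = "exp (\<i> * of_real t)" and ?p = "exp (\<i> * (a + 1) * (of_real t + of_real pi))"
    have "((\<lambda>z. G (exp (\<i> * z))) has_field_derivative deriv G ?e * (?e * \<i>)) (at (of_real t))"
      by (rule DERIV_chain2[OF G']) (auto intro!: derivative_eq_intros)
    moreover have "((\<lambda>z. exp (\<i> * (a + 1) * (z + of_real pi))) has_field_derivative ?p * (\<i> * (a + 1)))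
                     (at (of_real t))"
      by (auto intro!: derivative_eq_intros)
    ultimately have "(K has_field_derivative deriv G ?e * (?e * \<i>) * ?p + ?p * (\<i> * (a + 1)) * G ?e)
                       (at (of_real t))"
      unfolding K_def by (rule DERIV_mult)
    moreover have "deriv G ?e * (?e * \<i>) * ?p + ?p * (\<i> * (a + 1)) * G ?e
        = hankel_circle_integrand (deriv G) (a + 1) t - (a + 1) * hankel_circle_integrand G a t"
      unfolding hankel_circle_integrand_def exp_hankel_phase_succ by (simp add: algebra_simps)
    ultimately show ?thesis
      by (rule has_vector_derivative_real_field[OF DERIV_cong])
  qed
  then have "((\<lambda>t. hankel_circle_integrand (deriv G) (a + 1) t - (a + 1) * hankel_circle_integrand G a t)
               has_integral (K (of_real pi) - K (of_real (-pi)))) {-pi..pi}"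
    by (intro fundamental_theorem_of_calculus) auto
  moreover have "((\<lambda>t. hankel_circle_integrand (deriv G) (a + 1) t - (a + 1) * hankel_circle_integrand G a t)
               has_integral (hankel_circle (deriv G) (a + 1) - (a + 1) * hankel_circle G a)) {-pi..pi}"
    using G by (intro has_integral_diff has_integral_mult_right has_integral_hankel_circle
                  holomorphic_on_imp_continuous_on holomorphic_deriv) auto
  ultimately have "hankel_circle (deriv G) (a + 1) - (a + 1) * hankel_circle G a
                     = K (of_real pi) - K (of_real (-pi))"
    by (rule has_integral_unique[rotated])
  moreover have "K (of_real pi) = G (-1) * exp (2 * \<i> * of_real pi * (a + 1))"
    by (simp add: K_def algebra_simps)
  moreover have "K (of_real (-pi)) = G (-1)"
    by (simp add: K_def exp_minus)
  ultimately show ?thesis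
    by (simp add: algebra_simps)
qed

lemma hankel_integral_eq:
  assumes G: "continuous_on UNIV G" and lim: "(hankel_ray G a \<longlongrightarrow> l) at_top"
  shows "hankel_integral G a = (1 - exp (2 * \<i> * of_real pi * a)) * l + hankel_circle G a"
proof -
  define E where "E = exp (2 * \<i> * of_real pi * a)"
  have lower: "Lim at_top (\<lambda>R. contour_integral (linepath (- of_real R) (-1)) (\<lambda>s. G s * (-s) powr a)) = l"
  proof (intro tendsto_Lim Lim_transform_eventually[OF lim])
    show "\<forall>\<^sub>F R in at_top. hankel_ray G a R
            = contour_integral (linepath (- of_real R) (-1)) (\<lambda>s. G s * (-s) powr a)"
      using eventually_gt_at_top[of 1]
      by eventually_elim (simp add: contour_integral_unique[OF has_contour_integral_lower_ray[OF G]])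
  qed simp
  have upper: "Lim at_top (\<lambda>R. contour_integral (linepath (-1) (- of_real R)) (\<lambda>s. G s * (E * (-s) powr a)))
                 = - E * l"
  proof (intro tendsto_Lim Lim_transform_eventually[OF tendsto_mult_left[OF lim]])
    show "\<forall>\<^sub>F R in at_top. - E * hankel_ray G a R
            = contour_integral (linepath (-1) (- of_real R)) (\<lambda>s. G s * (E * (-s) powr a))"
      using eventually_gt_at_top[of 1]
      by eventually_elim (simp add: contour_integral_unique[OF has_contour_integral_upper_ray[OF G]])
  qed simp
  show ?thesis
    unfolding hankel_integral_def lower contour_integral_hankel_circle E_def[symmetric] upper
    by (simp add: algebra_simps)
qed

lemma exp_two_pi_i_succ: "exp (2 * \<i> * of_real pi * (a + 1)) = exp (2 * \<i> * of_real pi * a)"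
proof -
  have "2 * \<i> * of_real pi * (a + 1) = 2 * \<i> * of_real pi * a + \<i> * (of_int 1 * (of_real pi * 2))"
    by (simp add: algebra_simps)
  then show ?thesis by (simp only: exp_plus_2pin)
qed

lemma hankel_integral_linear:
  assumes "continuous_on UNIV G1" and "continuous_on UNIV G2"
    and "(hankel_ray G1 a \<longlongrightarrow> l1) at_top" and "(hankel_ray G2 a \<longlongrightarrow> l2) at_top"
  shows "hankel_integral (\<lambda>s. c * G1 s + d * G2 s) a = c * hankel_integral G1 a + d * hankel_integral G2 a"
proof -
  have "continuous_on UNIV (\<lambda>s. c * G1 s + d * G2 s)"
    by (intro continuous_intros assms(1,2))
  moreover have "(hankel_ray (\<lambda>s. c * G1 s + d * G2 s) a \<longlongrightarrow> c * l1 + d * l2) at_top"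
    unfolding hankel_ray_linear[OF assms(1,2)] by (intro tendsto_intros assms(3,4))
  ultimately have "hankel_integral (\<lambda>s. c * G1 s + d * G2 s) a
      = (1 - exp (2 * \<i> * of_real pi * a)) * (c * l1 + d * l2) + hankel_circle (\<lambda>s. c * G1 s + d * G2 s) a"
    by (rule hankel_integral_eq)
  then show ?thesis
    unfolding hankel_circle_linear[OF assms(1,2)] hankel_integral_eq[OF assms(1,3)]
      hankel_integral_eq[OF assms(2,4)]
    by (simp add: algebra_simps)
qed

lemma hankel_integral_mult_id:
  assumes "continuous_on UNIV G" and "(hankel_ray G (a + 1) \<longlongrightarrow> l) at_top"
  shows "hankel_integral (\<lambda>s. s * G s) a = - hankel_integral G (a + 1)"
proof -
  have "continuous_on UNIV (\<lambda>s. s * G s)"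
    by (intro continuous_intros assms(1))
  moreover have "(hankel_ray (\<lambda>s. s * G s) a \<longlongrightarrow> - l) at_top"
    unfolding hankel_ray_mult_id by (intro tendsto_intros assms(2))
  ultimately have "hankel_integral (\<lambda>s. s * G s) a
      = (1 - exp (2 * \<i> * of_real pi * a)) * (- l) + hankel_circle (\<lambda>s. s * G s) a"
    by (rule hankel_integral_eq)
  then show ?thesis
    unfolding hankel_circle_mult_id hankel_integral_eq[OF assms] exp_two_pi_i_succ
    by (simp add: algebra_simps)
qed

lemma hankel_ray_deriv_tendsto:
  assumes "G holomorphic_on UNIV" and "(hankel_ray G a \<longlongrightarrow> l) at_top"
    and "((\<lambda>R. G (- of_real R) * of_real R powr (a + 1)) \<longlongrightarrow> 0) at_top"
  shows "(hankel_ray (deriv G) (a + 1) \<longlongrightarrow> G (-1) + (a + 1) * l) at_top"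
proof -
  have "((\<lambda>R. G (-1) - G (- of_real R) * of_real R powr (a + 1) + (a + 1) * hankel_ray G a R)
          \<longlongrightarrow> G (-1) + (a + 1) * l) at_top"
    using tendsto_add[OF tendsto_diff[OF tendsto_const assms(3)] tendsto_mult_left[OF assms(2)]] by simp
  moreover have "\<forall>\<^sub>F R in at_top.
      G (-1) - G (- of_real R) * of_real R powr (a + 1) + (a + 1) * hankel_ray G a R
        = hankel_ray (deriv G) (a + 1) R"
    using eventually_ge_at_top[of 1] by eventually_elim (simp add: hankel_ray_deriv[OF assms(1)])
  ultimately show ?thesis
    by (rule Lim_transform_eventually)
qed

lemma hankel_integral_deriv:
  assumes G: "G holomorphic_on UNIV" and lim: "(hankel_ray G a \<longlongrightarrow> l) at_top"
    and "((\<lambda>R. G (- of_real R) * of_real R powr (a + 1)) \<longlongrightarrow> 0) at_top"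
  shows "hankel_integral (deriv G) (a + 1) = (a + 1) * hankel_integral G a"
proof -
  have cont: "continuous_on UNIV G" and cont': "continuous_on UNIV (deriv G)"
    using G by (auto intro: holomorphic_on_imp_continuous_on holomorphic_deriv)
  have "hankel_integral (deriv G) (a + 1)
      = (1 - exp (2 * \<i> * of_real pi * (a + 1))) * (G (-1) + (a + 1) * l) + hankel_circle (deriv G) (a + 1)"
    by (rule hankel_integral_eq[OF cont' hankel_ray_deriv_tendsto[OF assms]])
  also have "\<dots> = (a + 1) * ((1 - exp (2 * \<i> * of_real pi * (a + 1))) * l + hankel_circle G a)"
    unfolding hankel_circle_deriv[OF G] by (simp add: algebra_simps)
  also have "\<dots> = (a + 1) * hankel_integral G a"
    unfolding exp_two_pi_i_succ hankel_integral_eq[OF cont lim] ..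
  finally show ?thesis .
qed

section \<open>The transform frakN on O_d\<close>

definition hankel_admissible :: "(complex \<Rightarrow> complex) \<Rightarrow> bool" where
  "hankel_admissible G \<longleftrightarrow> G holomorphic_on UNIV \<and>
     (\<exists>c>0. ((\<lambda>R. norm (G (- of_real R)) * exp (c * R)) \<longlongrightarrow> 0) at_top)"

lemma hankel_admissible_imp_continuous: "hankel_admissible G \<Longrightarrow> continuous_on UNIV G"
  unfolding hankel_admissible_def using holomorphic_on_imp_continuous_on by blast

lemma hankel_admissible_ray_convergent:
  assumes "hankel_admissible G"
  shows "\<exists>l. (hankel_ray G a \<longlongrightarrow> l) at_top"
proof -
  obtain c where "c > 0" and decay: "((\<lambda>R. norm (G (- of_real R)) * exp (c * R)) \<longlongrightarrow> 0) at_top"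
    using assms unfolding hankel_admissible_def by blast
  show ?thesis
    unfolding hankel_ray_def[abs_def]
    using \<open>c > 0\<close>
    by (intro integral_tendsto_if_exp_decay[of _ _ "c / 2"] tendsto_zero_exp_decay_mult_powr[OF decay]
          continuous_on_hankel_ray_integrand hankel_admissible_imp_continuous assms) auto
qed

lemma hankel_admissible_ray_integrand_tendsto_zero:
  assumes "hankel_admissible G"
  shows "((\<lambda>R. G (- of_real R) * of_real R powr a) \<longlongrightarrow> 0) at_top"
proof -
  obtain c where "c > 0" and decay: "((\<lambda>R. norm (G (- of_real R)) * exp (c * R)) \<longlongrightarrow> 0) at_top"
    using assms unfolding hankel_admissible_def by blast
  have "((\<lambda>R. norm (G (- of_real R) * of_real R powr a) * exp (0 * R)) \<longlongrightarrow> 0) at_top"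
    using \<open>c > 0\<close> by (intro tendsto_zero_exp_decay_mult_powr[OF decay])
  then show ?thesis by (simp add: tendsto_norm_zero_iff)
qed

lemma O_d_imp_hankel_admissible:
  assumes "f \<in> O_d"
  shows "hankel_admissible (\<lambda>s. f s * exp s)"
proof -
  obtain m where "m < 1"
    and lim: "((\<lambda>x::real. norm (f (of_real x) * exp (of_real (m * x)))) \<longlongrightarrow> 0) at_bot"
    using assms unfolding O_d_def by blast
  have "norm (f (of_real (- R)) * exp (of_real (m * - R)))
          = norm (f (- of_real R) * exp (- of_real R)) * exp ((1 - m) * R)" for R
  proof -
    have "exp (- R) * exp ((1 - m) * R) = exp (- (m * R))"
      by (simp add: algebra_simps flip: exp_add)
    then show ?thesis by (simp add: norm_mult norm_exp_eq_Re mult.assoc)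
  qed
  then have "((\<lambda>R. norm (f (- of_real R) * exp (- of_real R)) * exp ((1 - m) * R)) \<longlongrightarrow> 0) at_top"
    using filterlim_compose[OF lim filterlim_uminus_at_bot_at_top] by simp
  moreover have "f holomorphic_on UNIV"
    using assms unfolding O_d_def by blast
  ultimately show ?thesis
    unfolding hankel_admissible_def using \<open>m < 1\<close>
    by (intro conjI holomorphic_intros exI[of _ "1 - m"]) auto
qed

definition frakN_factor :: "complex \<Rightarrow> complex" where
  "frakN_factor x = exp (- \<i> * of_real pi * x) * rGamma (- x) / (2 * \<i> * sin (of_real pi * x))"

lemma frakN_eq_factor: "frakN f x = frakN_factor x * hankel_integral (\<lambda>s. f s * exp s) (- x - 1)"
  unfolding frakN_def frakN_factor_def Gamma_def
  by (simp only: divide_inverse inverse_mult_distrib inverse_inverse_eq mult_ac)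

(* No hypothesis x \<notin> \<int> is needed: at integers both sides are 0, since sin (pi x) = 0 and
   division by 0 yields 0, and rGamma = 1 / Gamma has no poles. *)
lemma frakN_factor_succ: "frakN_factor (x + 1) = (- x - 1) * frakN_factor x"
proof -
  have "sin (of_real pi * (x + 1)) = - sin (of_real pi * x)"
    by (simp add: distrib_left sin_add flip: sin_of_real cos_of_real)
  moreover have "exp (- \<i> * of_real pi * (x + 1)) = - exp (- \<i> * of_real pi * x)"
    by (simp add: distrib_left exp_diff)
  moreover have "rGamma (- (x + 1)) = (- x - 1) * rGamma (- x)"
    using rGamma_plus1[of "- x - 1"] by simp
  ultimately show ?thesis
    unfolding frakN_factor_def by simp
qed

lemma frakN_factor_pred: "x * frakN_factor (x - 1) = - frakN_factor x"
  using frakN_factor_succ[of "x - 1"] by simp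

lemma frakN_linear:
  assumes "f \<in> O_d" and "g \<in> O_d"
  shows "frakN (\<lambda>s. c * f s + d * g s) x = c * frakN f x + d * frakN g x"
proof -
  let ?F = "\<lambda>s. f s * exp s" and ?G = "\<lambda>s. g s * exp s"
  have "hankel_admissible ?F" "hankel_admissible ?G"
    using assms by (auto intro: O_d_imp_hankel_admissible)
  then obtain l1 l2 where "(hankel_ray ?F (- x - 1) \<longlongrightarrow> l1) at_top" "(hankel_ray ?G (- x - 1) \<longlongrightarrow> l2) at_top"
    using hankel_admissible_ray_convergent by meson
  then have "hankel_integral (\<lambda>s. c * ?F s + d * ?G s) (- x - 1)
               = c * hankel_integral ?F (- x - 1) + d * hankel_integral ?G (- x - 1)"
    by (intro hankel_integral_linear hankel_admissible_imp_continuous \<open>hankel_admissible ?F\<close>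
          \<open>hankel_admissible ?G\<close>)
  then show ?thesis
    by (simp add: frakN_eq_factor algebra_simps)
qed

lemma frakN_deriv:
  assumes "f \<in> O_d"
  shows "frakN (deriv f) x = frakN f (x + 1) - frakN f x"
proof -
  define G where "G = (\<lambda>s. f s * exp s)"
  define a where "a = - x - 2"
  have G: "hankel_admissible G"
    unfolding G_def using assms by (rule O_d_imp_hankel_admissible)
  then have holo: "G holomorphic_on UNIV"
    unfolding hankel_admissible_def by blast
  have cont: "continuous_on UNIV G" and cont': "continuous_on UNIV (deriv G)"
    using holo by (auto intro: holomorphic_on_imp_continuous_on holomorphic_deriv)
  obtain l where l: "(hankel_ray G a \<longlongrightarrow> l) at_top"
    using hankel_admissible_ray_convergent[OF G] by blast
  obtain l' where l': "(hankel_ray G (a + 1) \<longlongrightarrow> l') at_top"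
    using hankel_admissible_ray_convergent[OF G] by blast
  have decay: "((\<lambda>R. G (- of_real R) * of_real R powr (a + 1)) \<longlongrightarrow> 0) at_top"
    by (rule hankel_admissible_ray_integrand_tendsto_zero[OF G])
  have "deriv G s = deriv f s * exp s + G s" for s
  proof -
    have "(f has_field_derivative deriv f s) (at s)"
      using assms unfolding O_d_def by (auto intro: holomorphic_derivI)
    then have "(G has_field_derivative deriv f s * exp s + G s) (at s)"
      unfolding G_def by (auto intro!: derivative_eq_intros)
    then show ?thesis by (rule DERIV_imp_deriv)
  qed
  then have "(\<lambda>s. deriv f s * exp s) = (\<lambda>s. deriv G s - G s)"
    by simp
  then have "hankel_integral (\<lambda>s. deriv f s * exp s) (a + 1)
               = hankel_integral (deriv G) (a + 1) - hankel_integral G (a + 1)"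
    using hankel_integral_linear[OF cont' cont hankel_ray_deriv_tendsto[OF holo l decay] l',
            where c = 1 and d = "-1"]
    by simp
  also have "\<dots> = (a + 1) * hankel_integral G a - hankel_integral G (a + 1)"
    unfolding hankel_integral_deriv[OF holo l decay] ..
  finally have hankel_deriv_f: "hankel_integral (\<lambda>s. deriv f s * exp s) (a + 1)
                  = (a + 1) * hankel_integral G a - hankel_integral G (a + 1)" .
  have shift: "- x - 1 = a + 1" "- (x + 1) - 1 = a"
    by (simp_all add: a_def)
  have "frakN (deriv f) x = frakN_factor x * ((a + 1) * hankel_integral G a - hankel_integral G (a + 1))"
    unfolding frakN_eq_factor shift(1) hankel_deriv_f ..
  also have "\<dots> = frakN f (x + 1) - frakN f x"
    unfolding frakN_eq_factor frakN_factor_succ shift G_def[symmetric] by (simp add: algebra_simps)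
  finally show ?thesis .
qed

lemma frakN_mult_id:
  assumes "f \<in> O_d"
  shows "frakN (\<lambda>s. s * f s) x = x * frakN f (x - 1)"
proof -
  define G where "G = (\<lambda>s. f s * exp s)"
  have G: "hankel_admissible G"
    unfolding G_def using assms by (rule O_d_imp_hankel_admissible)
  obtain l where "(hankel_ray G (- x - 1 + 1) \<longlongrightarrow> l) at_top"
    using hankel_admissible_ray_convergent[OF G] by blast
  then have "hankel_integral (\<lambda>s. s * G s) (- x - 1) = - hankel_integral G (- x - 1 + 1)"
    by (intro hankel_integral_mult_id hankel_admissible_imp_continuous G)
  then have "frakN (\<lambda>s. s * f s) x = - frakN_factor x * hankel_integral G (- (x - 1) - 1)"
    by (simp add: frakN_eq_factor G_def mult.assoc)
  also have "\<dots> = x * frakN f (x - 1)"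
    by (simp add: frakN_eq_factor G_def flip: frakN_factor_pred)
  finally show ?thesis .
qed

theorem mainTheorem10:
  shows "(\<forall>f\<in>O_d. \<forall>g\<in>O_d. \<forall>c d::complex.
            frakN (\<lambda>s. c * f s + d * g s) = (\<lambda>x. c * frakN f x + d * frakN g x))
       \<and> (\<forall>f\<in>O_d. \<forall>x::complex. x \<notin> \<int> \<longrightarrow>
            frakN (deriv f) x = frakN f (x + 1) - frakN f x)
       \<and> (\<forall>f\<in>O_d. \<forall>x::complex. x \<notin> \<int> \<longrightarrow>
            frakN (\<lambda>s. s * f s) x = x * frakN f (x - 1))"
  by (auto simp: fun_eq_iff frakN_linear frakN_deriv frakN_mult_id)

end
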